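(* Let $\mathcal S=\{x\in\mathbb R^n:x^TMx-2\beta^Tx+\gamma\le0\}$ be a paraboloid, let $\lambda_1$ be the largest eigenvalue of $M$, and let $u_n$ be the unit vector with $Mu_n=0$ and $\beta^Tu_n>0$ (so that $\mathrm{rec.cone}(\mathcal S)=\{tu_n:t\ge0\}$). (i) For every boundary point $\check x$ of $\mathcal S$ with $\|M\check x-\beta\|_2\ge\lambda_1\frac{\sqrt n}{2}$, there is $x\in\mathcal S\cap\mathbb Z^n$ with $\|x-\check x\|_2\le\sqrt n$. (ii) Let $\alpha\in\mathbb R^n$ with $u_n^T\alpha>0$, and let $\hat x$ be the minimizer of $\alpha^Tx$ over $\mathcal S$. Then $\dfrac{u_n^T\alpha}{\|\alpha\|_2}\le\dfrac{u_n^T\beta}{\lambda_1\sqrt n/2}$ holds if and only if $\|M\hat x-\beta\|_2\ge\lambda_1\frac{\sqrt n}2$; and in that case $$\min_{x\in\mathcal S\cap\mathbb Z^n}\alpha^Tx-\min_{x\in\mathcal S}\alpha^Tx\le\|\alpha\|_2\sqrt n .$$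
   Context: Paraboloid: $M\in\mathbb S^n$ is positive semidefinite of rank $n-1$, $\beta\in\mathbb R^n$, $\gamma\in\mathbb R$, and the linear system $Mx=\beta$ has no solution. *)

theory Defs
  imports "HOL-Analysis.Analysis"
begin

definition quad_set :: "real^'n^'n \<Rightarrow> real^'n \<Rightarrow> real \<Rightarrow> (real^'n) set" where
  "quad_set M \<beta> \<gamma> = {x. x \<bullet> (M *v x) - 2 * (\<beta> \<bullet> x) + \<gamma> \<le> 0}"

definition is_paraboloid :: "real^'n^'n \<Rightarrow> real^'n \<Rightarrow> bool" where
  "is_paraboloid M \<beta> \<longleftrightarrow> transpose M = M \<and> (\<forall>x. 0 \<le> x \<bullet> (M *v x))
     \<and> rank M = CARD('n) - 1 \<and> \<not> (\<exists>x. M *v x = \<beta>)"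

definition eigenvalue_of :: "real^'n^'n \<Rightarrow> real \<Rightarrow> bool" where
  "eigenvalue_of M l \<longleftrightarrow> (\<exists>v. v \<noteq> 0 \<and> M *v v = l *\<^sub>R v)"

definition largest_eigenvalue :: "real^'n^'n \<Rightarrow> real" where
  "largest_eigenvalue M = Max {l. eigenvalue_of M l}"

definition integer_vector :: "real^'n \<Rightarrow> bool" where
  "integer_vector x \<longleftrightarrow> (\<forall>i. x $ i \<in> \<int>)"

end

theory Submission
  imports Defs
begin

text \<open>Write \<open>q x = x\<^sup>T M x - 2 \<beta>\<^sup>T x + \<gamma>\<close> and \<open>\<lambda>\<^sub>1\<close> for the largest eigenvalue of \<open>M\<close>, so that
  \<open>q (x + h) \<le> q x + 2 (M x - \<beta>)\<^sup>T h + \<lambda>\<^sub>1 \<parallel>h\<parallel>\<^sup>2\<close>. Hence at a point \<open>x\<close> of \<open>\<S>\<close> with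
  \<open>\<parallel>M x - \<beta>\<parallel> \<ge> \<lambda>\<^sub>1 r\<close> the closed ball of radius \<open>r\<close> touching \<open>x\<close> from the side of the
  inward normal \<open>-(M x - \<beta>)\<close> lies in \<open>\<S>\<close>; for \<open>r = \<surd>n / 2\<close> rounding its centre yields an
  integer point of \<open>\<S>\<close> within distance \<open>\<surd>n\<close> of \<open>x\<close>.
  At the minimizer \<open>x'\<close> of \<open>\<alpha>\<^sup>T x\<close> over \<open>\<S>\<close> the gradient \<open>M x' - \<beta>\<close> is nonzero, because
  \<open>M x = \<beta>\<close> is unsolvable, so optimality forces \<open>\<alpha> = -c (M x' - \<beta>)\<close> with \<open>c > 0\<close>. Pairing
  with the kernel vector \<open>u\<close> gives \<open>\<parallel>M x' - \<beta>\<parallel> = \<parallel>\<alpha>\<parallel> u\<^sup>T\<beta> / u\<^sup>T\<alpha>\<close>, which turns the angle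
  criterion into the steepness condition at \<open>x'\<close>.\<close>

subsection \<open>Symmetric positive semidefinite matrices\<close>

lemma matrix_vector_mult_inner_symmetric:
  fixes M :: "real^'n^'n"
  assumes "transpose M = M"
  shows "(M *v x) \<bullet> y = x \<bullet> (M *v y)"
  by (metis assms dot_lmul_matrix vector_transpose_matrix)

lemma self_adjoint_nonneg_form_zero_imp_zero:
  fixes f :: "'a::real_inner \<Rightarrow> 'a"
  assumes lin: "linear f"
    and adj: "\<And>x y. f x \<bullet> y = x \<bullet> f y"
    and nonneg: "\<And>x. 0 \<le> x \<bullet> f x"
    and zero: "v \<bullet> f v = 0"
  shows "f v = 0"
proof (rule ccontr)
  assume "f v \<noteq> 0"
  define a where "a = f v \<bullet> f v"
  define b where "b = f v \<bullet> f (f v)"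
  have a: "a > 0" using \<open>f v \<noteq> 0\<close> by (simp add: a_def)
  have b: "b \<ge> 0" using nonneg by (simp add: b_def)
  define t where "t = a / (b + 1)"
  have t: "t > 0" using a b by (simp add: t_def)
  have "t * b < a"
    using a b by (simp add: t_def field_simps)
  have "v \<bullet> f (f v) = a" using adj[of v "f v"] by (simp add: a_def)
  then have "(v - t *\<^sub>R f v) \<bullet> f (v - t *\<^sub>R f v) = v \<bullet> f v - 2 * t * a + t\<^sup>2 * b"
    by (simp add: linear_diff[OF lin] linear_scale[OF lin]
        a_def b_def power2_eq_square algebra_simps)
  also have "\<dots> = t * (t * b - 2 * a)"
    by (simp add: zero power2_eq_square algebra_simps)
  also have "\<dots> < 0"
    using t \<open>t * b < a\<close> a by (simp add: mult_pos_neg)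
  finally show False using nonneg by (metis not_le)
qed

lemma symmetric_matrix_top_eigenvector:
  fixes M :: "real^'n^'n"
  assumes sym: "transpose M = M"
  obtains v \<mu> where "norm v = 1" "M *v v = \<mu> *\<^sub>R v" "\<And>x. x \<bullet> (M *v x) \<le> \<mu> * (norm x)\<^sup>2"
proof -
  have cont: "continuous_on (sphere (0::real^'n) 1) (\<lambda>x. x \<bullet> (M *v x))"
    by (intro continuous_intros linear_continuous_on matrix_vector_mul_bounded_linear)
  obtain v where v: "v \<in> sphere 0 1"
    and max: "\<And>y. y \<in> sphere 0 1 \<Longrightarrow> y \<bullet> (M *v y) \<le> v \<bullet> (M *v v)"
    using continuous_attains_sup[OF compact_sphere _ cont] by auto
  define \<mu> where "\<mu> = v \<bullet> (M *v v)"
  have bound: "x \<bullet> (M *v x) \<le> \<mu> * (norm x)\<^sup>2" for x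
  proof (cases "x = 0")
    case False
    have "(x /\<^sub>R norm x) \<bullet> (M *v (x /\<^sub>R norm x)) \<le> \<mu>"
      using max[of "x /\<^sub>R norm x"] False by (simp add: \<mu>_def)
    then show ?thesis
      using False by (simp add: matrix_vector_mult_scaleR power2_eq_square field_simps)
  qed simp
  have "(\<lambda>x. \<mu> *\<^sub>R x - M *v x) v = 0"
  proof (rule self_adjoint_nonneg_form_zero_imp_zero[where f="\<lambda>x. \<mu> *\<^sub>R x - M *v x"])
    show "linear (\<lambda>x. \<mu> *\<^sub>R x - M *v x)"
      by (intro linear_compose_sub linear_scaleR matrix_vector_mul_linear)
    show "(\<mu> *\<^sub>R x - M *v x) \<bullet> y = x \<bullet> (\<mu> *\<^sub>R y - M *v y)" for x y
      by (simp add: matrix_vector_mult_inner_symmetric[OF sym] inner_diff_left inner_diff_right)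
    show "0 \<le> x \<bullet> (\<mu> *\<^sub>R x - M *v x)" for x
      using bound[of x] by (simp add: inner_diff_right dot_square_norm)
    show "v \<bullet> (\<mu> *\<^sub>R v - M *v v) = 0"
      using v by (simp add: inner_diff_right \<mu>_def dot_square_norm)
  qed
  then have "M *v v = \<mu> *\<^sub>R v" by simp
  with v bound show ?thesis by (intro that) simp_all
qed

lemma finite_eigenvalues_symmetric:
  fixes M :: "real^'n^'n"
  assumes sym: "transpose M = M"
  shows "finite {l. eigenvalue_of M l}"
proof -
  define S where "S = {l. eigenvalue_of M l}"
  define ev where "ev l = (SOME v. v \<noteq> 0 \<and> M *v v = l *\<^sub>R v)" for l
  have ev: "ev l \<noteq> 0 \<and> M *v ev l = l *\<^sub>R ev l" if l: "l \<in> S" for l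
  proof -
    obtain v where "v \<noteq> 0 \<and> M *v v = l *\<^sub>R v"
      using l unfolding S_def eigenvalue_of_def by blast
    then show ?thesis unfolding ev_def by (rule someI)
  qed
  have inj: "inj_on ev S"
  proof (rule inj_onI)
    fix a b assume a: "a \<in> S" and b: "b \<in> S" and "ev a = ev b"
    then have "a *\<^sub>R ev a = b *\<^sub>R ev a" using ev[OF a] ev[OF b] by metis
    then show "a = b" using ev[OF a] by simp
  qed
  have "pairwise orthogonal (ev ` S)"
  proof (clarsimp simp: pairwise_def)
    fix a b assume a: "a \<in> S" and b: "b \<in> S" and "ev a \<noteq> ev b"
    then have "a \<noteq> b" by auto
    have "(M *v ev a) \<bullet> ev b = ev a \<bullet> (M *v ev b)"
      by (rule matrix_vector_mult_inner_symmetric[OF sym])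
    then have "a * (ev a \<bullet> ev b) = b * (ev a \<bullet> ev b)"
      using ev[OF a] ev[OF b] by simp
    then show "orthogonal (ev a) (ev b)"
      using \<open>a \<noteq> b\<close> by (simp add: orthogonal_def)
  qed
  moreover have "0 \<notin> ev ` S" using ev by auto
  ultimately have "independent (ev ` S)"
    by (rule pairwise_orthogonal_independent)
  then have "finite (ev ` S)"
    using independent_bound by blast
  then have "finite S"
    using inj finite_imageD by blast
  then show ?thesis by (simp add: S_def)
qed

lemma quadratic_form_le_largest_eigenvalue:
  fixes M :: "real^'n^'n"
  assumes sym: "transpose M = M"
  shows "x \<bullet> (M *v x) \<le> largest_eigenvalue M * (norm x)\<^sup>2"
proof -
  obtain v \<mu> where "norm v = 1" "M *v v = \<mu> *\<^sub>R v" and bound: "\<And>x. x \<bullet> (M *v x) \<le> \<mu> * (norm x)\<^sup>2"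
    using symmetric_matrix_top_eigenvector[OF sym] by blast
  then have "eigenvalue_of M \<mu>"
    unfolding eigenvalue_of_def by (metis norm_zero zero_neq_one)
  then have "\<mu> \<le> largest_eigenvalue M"
    unfolding largest_eigenvalue_def using finite_eigenvalues_symmetric[OF sym] by (intro Max_ge) auto
  then show ?thesis
    using bound[of x] by (meson mult_right_mono order_trans zero_le_power2)
qed

lemma largest_eigenvalue_pos:
  fixes M :: "real^'n^'n"
  assumes sym: "transpose M = M" and psd: "\<And>x. 0 \<le> x \<bullet> (M *v x)" and "M \<noteq> 0"
  shows "largest_eigenvalue M > 0"
proof (rule ccontr)
  assume "\<not> largest_eigenvalue M > 0"
  then have zero: "x \<bullet> (M *v x) = 0" for x
    using quadratic_form_le_largest_eigenvalue[OF sym, of x] psd[of x]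
    by (smt (verit) mult_nonpos_nonneg zero_le_power2)
  have "M *v x = 0" for x
  proof (rule self_adjoint_nonneg_form_zero_imp_zero[where f="(*v) M"])
    show "linear ((*v) M)" by (rule matrix_vector_mul_linear)
  qed (simp_all add: matrix_vector_mult_inner_symmetric[OF sym] psd zero)
  then have "M = 0" by (simp add: matrix_eq)
  with \<open>M \<noteq> 0\<close> show False ..
qed

lemma paraboloid_largest_eigenvalue_pos:
  fixes M :: "real^'n^'n"
  assumes "is_paraboloid M \<beta>" and "CARD('n) \<ge> 2"
  shows "largest_eigenvalue M > 0"
proof (rule largest_eigenvalue_pos)
  show "transpose M = M" "\<And>x. 0 \<le> x \<bullet> (M *v x)"
    using assms(1) by (auto simp: is_paraboloid_def)
  have "rank M \<noteq> 0"
    using assms by (auto simp: is_paraboloid_def)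
  then show "M \<noteq> 0" by auto
qed

definition quad_fun :: "real^'n^'n \<Rightarrow> real^'n \<Rightarrow> real \<Rightarrow> real^'n \<Rightarrow> real" where
  "quad_fun M \<beta> \<gamma> x = x \<bullet> (M *v x) - 2 * (\<beta> \<bullet> x) + \<gamma>"

lemma mem_quad_set: "x \<in> quad_set M \<beta> \<gamma> \<longleftrightarrow> quad_fun M \<beta> \<gamma> x \<le> 0"
  by (simp add: quad_set_def quad_fun_def)

lemma quad_fun_add:
  fixes M :: "real^'n^'n"
  assumes sym: "transpose M = M"
  shows "quad_fun M \<beta> \<gamma> (y + h) = quad_fun M \<beta> \<gamma> y + 2 * ((M *v y - \<beta>) \<bullet> h) + h \<bullet> (M *v h)"
proof -
  have "h \<bullet> (M *v y) = (M *v y) \<bullet> h" by (simp add: inner_commute)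
  moreover have "y \<bullet> (M *v h) = (M *v y) \<bullet> h"
    using matrix_vector_mult_inner_symmetric[OF sym, of y h] by simp
  ultimately show ?thesis
    by (simp add: quad_fun_def algebra_simps)
qed

lemma closed_quad_set: "closed (quad_set (M::real^'n^'n) \<beta> \<gamma>)"
  unfolding quad_set_def
  by (intro closed_Collect_le continuous_intros linear_continuous_on matrix_vector_mul_bounded_linear)

subsection \<open>Integer points near a steep point of the quadric\<close>

lemma exists_integer_vector_dist_le:
  fixes c :: "real^'n"
  obtains x where "integer_vector x" "norm (x - c) \<le> sqrt (CARD('n)) / 2"
proof
  define x :: "real^'n" where "x = (\<chi> i. of_int (round (c $ i)))"
  show "integer_vector x" by (simp add: integer_vector_def x_def)
  have "(x - c) \<bullet> (x - c) = (\<Sum>i\<in>UNIV. (x $ i - c $ i)\<^sup>2)"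
    by (simp add: inner_vec_def power2_eq_square)
  also have "\<dots> \<le> (\<Sum>i\<in>(UNIV::'n set). (1/2)\<^sup>2)"
  proof (rule sum_mono)
    fix i
    have "\<bar>x $ i - c $ i\<bar> \<le> 1/2"
      using of_int_round_abs_le[of "c $ i"] by (simp add: x_def)
    then show "(x $ i - c $ i)\<^sup>2 \<le> (1/2)\<^sup>2"
      by (metis abs_ge_zero power2_abs power_mono)
  qed
  finally have "norm (x - c) \<le> sqrt (CARD('n) / 4)"
    by (simp add: norm_eq_sqrt_inner power2_eq_square)
  then show "norm (x - c) \<le> sqrt (CARD('n)) / 2" by (simp add: real_sqrt_divide)
qed

text \<open>The ball is tangent at \<open>x\<close>; a point \<open>x + h\<close> of it satisfies
  \<open>\<parallel>h\<parallel>\<^sup>2 \<le> 2 r s\<close> with \<open>s = -(M x - \<beta>)\<^sup>T h / \<parallel>M x - \<beta>\<parallel>\<close>, so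
  \<open>q (x + h) \<le> 2 s (\<mu> r - \<parallel>M x - \<beta>\<parallel>) \<le> 0\<close>.\<close>

lemma cball_subset_quad_set:
  fixes M :: "real^'n^'n"
  assumes sym: "transpose M = M"
    and bound: "\<And>h. h \<bullet> (M *v h) \<le> \<mu> * (norm h)\<^sup>2" and "\<mu> \<ge> 0"
    and x: "x \<in> quad_set M \<beta> \<gamma>" and grad: "M *v x \<noteq> \<beta>"
    and "r > 0" and steep: "\<mu> * r \<le> norm (M *v x - \<beta>)"
  shows "cball (x - r *\<^sub>R ((M *v x - \<beta>) /\<^sub>R norm (M *v x - \<beta>))) r \<subseteq> quad_set M \<beta> \<gamma>"
proof
  define w where "w = M *v x - \<beta>"
  define d where "d = - (w /\<^sub>R norm w)"
  have "norm d = 1" and wd: "w = - norm w *\<^sub>R d"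
    using grad by (auto simp: d_def w_def)
  fix y assume "y \<in> cball (x - r *\<^sub>R ((M *v x - \<beta>) /\<^sub>R norm (M *v x - \<beta>))) r"
  then have "norm (y - x - r *\<^sub>R d) \<le> r"
    by (simp add: dist_norm norm_minus_commute d_def w_def algebra_simps)
  define h where "h = y - x"
  define s where "s = d \<bullet> h"
  have "(norm (h - r *\<^sub>R d))\<^sup>2 \<le> r\<^sup>2"
    using \<open>norm (y - x - r *\<^sub>R d) \<le> r\<close> by (simp add: h_def power_mono)
  moreover have "2 * r * s = (norm h)\<^sup>2 + r\<^sup>2 - (norm (h - r *\<^sub>R d))\<^sup>2"
    using dot_norm_neg[of h "r *\<^sub>R d"] \<open>norm d = 1\<close> \<open>r > 0\<close>
    by (simp add: s_def inner_commute)
  ultimately have hs: "(norm h)\<^sup>2 \<le> 2 * r * s" by linarith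
  then have "s \<ge> 0" using \<open>r > 0\<close> by (smt (verit) mult_pos_neg zero_le_power2)
  have "quad_fun M \<beta> \<gamma> y = quad_fun M \<beta> \<gamma> x + 2 * (w \<bullet> h) + h \<bullet> (M *v h)"
    using quad_fun_add[OF sym, of \<beta> \<gamma> x h] by (simp add: h_def w_def)
  also have "\<dots> \<le> 2 * (w \<bullet> h) + \<mu> * (2 * r * s)"
    using x bound[of h] mult_left_mono[OF hs \<open>\<mu> \<ge> 0\<close>] by (simp add: mem_quad_set)
  also have "\<dots> = 2 * s * (\<mu> * r - norm w)"
    by (subst wd) (simp add: s_def algebra_simps)
  also have "\<dots> \<le> 0" using \<open>s \<ge> 0\<close> steep by (simp add: mult_nonneg_nonpos w_def)
  finally show "y \<in> quad_set M \<beta> \<gamma>" by (simp add: mem_quad_set)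
qed

lemma integer_point_near_steep_point:
  fixes M :: "real^'n^'n"
  assumes par: "is_paraboloid M \<beta>" and n2: "CARD('n) \<ge> 2"
    and x: "x \<in> quad_set M \<beta> \<gamma>"
    and steep: "norm (M *v x - \<beta>) \<ge> largest_eigenvalue M * sqrt (CARD('n)) / 2"
  obtains z where "z \<in> quad_set M \<beta> \<gamma>" "integer_vector z" "norm (z - x) \<le> sqrt (CARD('n))"
proof -
  have sym: "transpose M = M" and grad: "M *v x \<noteq> \<beta>"
    using par by (auto simp: is_paraboloid_def)
  define r where "r = sqrt (CARD('n)) / 2"
  define c where "c = x - r *\<^sub>R ((M *v x - \<beta>) /\<^sub>R norm (M *v x - \<beta>))"
  obtain z where z: "integer_vector z" "norm (z - c) \<le> r"
    using exists_integer_vector_dist_le unfolding r_def by blast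
  have "cball c r \<subseteq> quad_set M \<beta> \<gamma>"
    unfolding c_def
  proof (rule cball_subset_quad_set[OF sym quadratic_form_le_largest_eigenvalue[OF sym] _ x grad])
    show "0 \<le> largest_eigenvalue M"
      using paraboloid_largest_eigenvalue_pos[OF par n2] by simp
    show "0 < r" by (simp add: r_def)
    show "largest_eigenvalue M * r \<le> norm (M *v x - \<beta>)"
      using steep by (simp add: r_def)
  qed
  then have "z \<in> quad_set M \<beta> \<gamma>"
    using z by (auto simp: dist_norm norm_minus_commute)
  moreover have "norm (z - x) \<le> sqrt (CARD('n))"
  proof -
    have "norm (c - x) = r" using grad by (simp add: c_def r_def)
    moreover have "norm (z - x) \<le> norm (z - c) + norm (c - x)"
      using norm_triangle_ineq[of "z - c" "c - x"] by simp
    ultimately show ?thesis using z by (simp add: r_def)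
  qed
  ultimately show ?thesis using z that by blast
qed

subsection \<open>The minimizer of a linear function over the paraboloid\<close>

lemma quad_set_descent_direction:
  fixes M :: "real^'n^'n"
  assumes sym: "transpose M = M" and x: "x \<in> quad_set M \<beta> \<gamma>" and "(M *v x - \<beta>) \<bullet> h < 0"
  obtains s where "s > 0" "x + s *\<^sub>R h \<in> quad_set M \<beta> \<gamma>"
proof
  define g where "g = (M *v x - \<beta>) \<bullet> h"
  define q where "q = h \<bullet> (M *v h)"
  define s where "s = - g / (\<bar>q\<bar> + 1)"
  show "s > 0" using assms(3) by (simp add: s_def g_def divide_neg_pos add_nonneg_pos)
  have "s * \<bar>q\<bar> \<le> - g"
    using assms(3) by (simp add: s_def g_def field_simps)
  moreover have "s * q \<le> s * \<bar>q\<bar>"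
    using \<open>s > 0\<close> by (simp add: mult_left_mono)
  ultimately have "2 * g + s * q \<le> 0"
    using assms(3) unfolding g_def by linarith
  then have "s * (2 * g + s * q) \<le> 0"
    using \<open>s > 0\<close> by (simp add: mult_nonneg_nonpos)
  then have "quad_fun M \<beta> \<gamma> (x + s *\<^sub>R h) \<le> quad_fun M \<beta> \<gamma> x"
    by (simp add: quad_fun_add[OF sym] g_def q_def algebra_simps)
  then show "x + s *\<^sub>R h \<in> quad_set M \<beta> \<gamma>"
    using x by (simp add: mem_quad_set)
qed

text \<open>Farkas' lemma for a single constraint.\<close>

lemma nonneg_on_open_halfspace_imp_nonpos_multiple:
  fixes w \<alpha> :: "'a::real_inner"
  assumes "w \<noteq> 0" and nonneg: "\<And>h. w \<bullet> h < 0 \<Longrightarrow> 0 \<le> \<alpha> \<bullet> h"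
  obtains c where "c \<le> 0" "\<alpha> = c *\<^sub>R w"
proof
  define c where "c = (\<alpha> \<bullet> w) / (w \<bullet> w)"
  define p where "p = \<alpha> - c *\<^sub>R w"
  have ww: "w \<bullet> w > 0" using \<open>w \<noteq> 0\<close> by simp
  have wp: "w \<bullet> p = 0" using ww by (simp add: p_def c_def inner_diff_right inner_commute)
  have "\<alpha> \<bullet> w \<le> 0" using nonneg[of "- w"] ww by simp
  then show "c \<le> 0" using ww by (simp add: c_def divide_nonpos_pos)
  have small: "p \<bullet> p \<le> e" if "e > 0" for e
  proof -
    define t where "t = e / (\<bar>\<alpha> \<bullet> w\<bar> + 1)"
    have "t > 0" using that by (simp add: t_def add_nonneg_pos)
    have "\<alpha> \<bullet> p = p \<bullet> p"
      using wp by (simp add: p_def inner_diff_left inner_commute)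
    then have "\<alpha> \<bullet> (- p - t *\<^sub>R w) = t * (- (\<alpha> \<bullet> w)) - p \<bullet> p"
      by (simp add: inner_diff_right)
    moreover have "0 \<le> \<alpha> \<bullet> (- p - t *\<^sub>R w)"
      using \<open>t > 0\<close> ww wp by (intro nonneg) (simp add: inner_diff_right)
    moreover have "t * (- (\<alpha> \<bullet> w)) \<le> t * (\<bar>\<alpha> \<bullet> w\<bar> + 1)"
      using \<open>t > 0\<close> by (intro mult_left_mono) auto
    moreover have "t * (\<bar>\<alpha> \<bullet> w\<bar> + 1) = e"
      by (simp add: t_def)
    ultimately show ?thesis by linarith
  qed
  have "p \<bullet> p \<le> 0"
    by (rule field_le_epsilon) (simp add: small)
  then have "p \<bullet> p = 0" using inner_ge_zero[of p] by linarith
  then have "p = 0" by simp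
  then show "\<alpha> = c *\<^sub>R w" by (simp add: p_def)
qed

lemma paraboloid_minimizer_gradient_norm:
  fixes M :: "real^'n^'n"
  assumes par: "is_paraboloid M \<beta>" and u_ker: "M *v u = 0" and u_pos: "\<beta> \<bullet> u > 0"
    and "u \<bullet> \<alpha> > 0" and xh: "xh \<in> quad_set M \<beta> \<gamma>"
    and min: "\<forall>x \<in> quad_set M \<beta> \<gamma>. \<alpha> \<bullet> xh \<le> \<alpha> \<bullet> x"
  shows "norm (M *v xh - \<beta>) = norm \<alpha> * (u \<bullet> \<beta>) / (u \<bullet> \<alpha>)"
proof -
  have sym: "transpose M = M" and grad: "M *v xh - \<beta> \<noteq> 0"
    using par by (auto simp: is_paraboloid_def)
  have "0 \<le> \<alpha> \<bullet> h" if descent: "(M *v xh - \<beta>) \<bullet> h < 0" for h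
  proof -
    obtain s where "s > 0" "xh + s *\<^sub>R h \<in> quad_set M \<beta> \<gamma>"
      using quad_set_descent_direction[OF sym xh descent] .
    then show ?thesis using min by (fastforce simp: inner_add_right zero_le_mult_iff)
  qed
  then obtain c where "c \<le> 0" and \<alpha>: "\<alpha> = c *\<^sub>R (M *v xh - \<beta>)"
    using nonneg_on_open_halfspace_imp_nonpos_multiple[OF grad] by blast
  have "u \<bullet> (M *v xh) = 0"
    using matrix_vector_mult_inner_symmetric[OF sym, of u xh] u_ker by simp
  then have "u \<bullet> \<alpha> = - c * (u \<bullet> \<beta>)" by (simp add: \<alpha> inner_diff_right)
  moreover have "norm \<alpha> = - c * norm (M *v xh - \<beta>)" using \<open>c \<le> 0\<close> by (simp add: \<alpha>)
  ultimately show ?thesis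
    using \<open>u \<bullet> \<alpha> > 0\<close> u_pos by (auto simp: inner_commute)
qed

lemma paraboloid_minimizer_steep_iff:
  fixes M :: "real^'n^'n"
  assumes par: "is_paraboloid M \<beta>" and n2: "CARD('n) \<ge> 2"
    and u_ker: "M *v u = 0" and u_pos: "\<beta> \<bullet> u > 0"
    and "u \<bullet> \<alpha> > 0" and xh: "xh \<in> quad_set M \<beta> \<gamma>"
    and min: "\<forall>x \<in> quad_set M \<beta> \<gamma>. \<alpha> \<bullet> xh \<le> \<alpha> \<bullet> x"
  defines "L \<equiv> largest_eigenvalue M * sqrt (CARD('n)) / 2"
  shows "(u \<bullet> \<alpha>) / norm \<alpha> \<le> (u \<bullet> \<beta>) / L \<longleftrightarrow> norm (M *v xh - \<beta>) \<ge> L"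
proof -
  have "L > 0" using paraboloid_largest_eigenvalue_pos[OF par n2] by (simp add: L_def)
  have "norm \<alpha> > 0" using \<open>u \<bullet> \<alpha> > 0\<close> by auto
  have "(u \<bullet> \<alpha>) / norm \<alpha> \<le> (u \<bullet> \<beta>) / L \<longleftrightarrow> (u \<bullet> \<alpha>) * L \<le> norm \<alpha> * (u \<bullet> \<beta>)"
    using \<open>L > 0\<close> \<open>norm \<alpha> > 0\<close> by (simp add: divide_le_eq le_divide_eq mult.commute)
  also have "\<dots> \<longleftrightarrow> L \<le> norm \<alpha> * (u \<bullet> \<beta>) / (u \<bullet> \<alpha>)"
    using \<open>u \<bullet> \<alpha> > 0\<close> by (simp add: le_divide_eq mult.commute)
  finally show ?thesis
    using paraboloid_minimizer_gradient_norm[OF par u_ker u_pos \<open>u \<bullet> \<alpha> > 0\<close> xh min] by simp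
qed

theorem proposition6p4:
  fixes M :: "real^'n^'n" and \<beta> u :: "real^'n" and \<gamma> :: real
  assumes n2: "CARD('n) \<ge> 2"
    and par: "is_paraboloid M \<beta>"
    and u_unit: "norm u = 1" and u_ker: "M *v u = 0" and u_pos: "\<beta> \<bullet> u > 0"
  shows
    "(\<forall>xc \<in> frontier (quad_set M \<beta> \<gamma>).
        norm (M *v xc - \<beta>) \<ge> largest_eigenvalue M * sqrt (CARD('n)) / 2 \<longrightarrow>
        (\<exists>x \<in> quad_set M \<beta> \<gamma>. integer_vector x \<and> norm (x - xc) \<le> sqrt (CARD('n))))
   \<and> (\<forall>\<alpha> xh. u \<bullet> \<alpha> > 0 \<and> xh \<in> quad_set M \<beta> \<gamma> \<and> (\<forall>x \<in> quad_set M \<beta> \<gamma>. \<alpha> \<bullet> xh \<le> \<alpha> \<bullet> x) \<longrightarrow>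
        ((u \<bullet> \<alpha>) / norm \<alpha> \<le> (u \<bullet> \<beta>) / (largest_eigenvalue M * sqrt (CARD('n)) / 2)
           \<longleftrightarrow> norm (M *v xh - \<beta>) \<ge> largest_eigenvalue M * sqrt (CARD('n)) / 2)
        \<and> (norm (M *v xh - \<beta>) \<ge> largest_eigenvalue M * sqrt (CARD('n)) / 2 \<longrightarrow>
           (\<exists>x \<in> quad_set M \<beta> \<gamma>. integer_vector x \<and> \<alpha> \<bullet> x - \<alpha> \<bullet> xh \<le> norm \<alpha> * sqrt (CARD('n)))))"
proof (intro conjI ballI impI allI)
  fix xc assume "xc \<in> frontier (quad_set M \<beta> \<gamma>)"
    and steep: "norm (M *v xc - \<beta>) \<ge> largest_eigenvalue M * sqrt (CARD('n)) / 2"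
  then have "xc \<in> quad_set M \<beta> \<gamma>"
    using frontier_subset_closed[OF closed_quad_set] by blast
  then obtain x where "x \<in> quad_set M \<beta> \<gamma>" "integer_vector x" "norm (x - xc) \<le> sqrt (CARD('n))"
    using integer_point_near_steep_point[OF par n2 _ steep] by blast
  then show "\<exists>x \<in> quad_set M \<beta> \<gamma>. integer_vector x \<and> norm (x - xc) \<le> sqrt (CARD('n))"
    by blast
next
  fix \<alpha> xh
  assume "u \<bullet> \<alpha> > 0 \<and> xh \<in> quad_set M \<beta> \<gamma> \<and> (\<forall>x \<in> quad_set M \<beta> \<gamma>. \<alpha> \<bullet> xh \<le> \<alpha> \<bullet> x)"
  then show "(u \<bullet> \<alpha>) / norm \<alpha> \<le> (u \<bullet> \<beta>) / (largest_eigenvalue M * sqrt (CARD('n)) / 2)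
           \<longleftrightarrow> norm (M *v xh - \<beta>) \<ge> largest_eigenvalue M * sqrt (CARD('n)) / 2"
    using paraboloid_minimizer_steep_iff[OF par n2 u_ker u_pos] by blast
next
  fix \<alpha> xh
  assume "u \<bullet> \<alpha> > 0 \<and> xh \<in> quad_set M \<beta> \<gamma> \<and> (\<forall>x \<in> quad_set M \<beta> \<gamma>. \<alpha> \<bullet> xh \<le> \<alpha> \<bullet> x)"
    and steep: "norm (M *v xh - \<beta>) \<ge> largest_eigenvalue M * sqrt (CARD('n)) / 2"
  then obtain x where x: "x \<in> quad_set M \<beta> \<gamma>" "integer_vector x" "norm (x - xh) \<le> sqrt (CARD('n))"
    using integer_point_near_steep_point[OF par n2 _ steep] by blast
  have "\<alpha> \<bullet> x - \<alpha> \<bullet> xh \<le> norm \<alpha> * norm (x - xh)"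
    using norm_cauchy_schwarz[of \<alpha> "x - xh"] by (simp add: inner_diff_right)
  also have "\<dots> \<le> norm \<alpha> * sqrt (CARD('n))"
    using x(3) by (simp add: mult_left_mono)
  finally show "\<exists>x \<in> quad_set M \<beta> \<gamma>. integer_vector x \<and> \<alpha> \<bullet> x - \<alpha> \<bullet> xh \<le> norm \<alpha> * sqrt (CARD('n))"
    using x by blast
qed

end
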